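(* Let $n\ge2$, $\alpha\in(-n,0)$ and let $\phi$ be a Young function. For any domain $\Omega\subset\mathbb R^n$, we have $\mathbf B^{\alpha,\phi}(\Omega)\subset\dot{\mathbf B}^{\alpha,\phi}(\Omega)\subset L^1_{\mathrm{loc}}(\Omega)$ as sets.
   Context: A Young function is $\phi\in C([0,\infty))$, convex, with $\phi(0)=0$, $\phi(t)>0$ for $t>0$, $\lim_{t\to\infty}\phi(t)=\infty$. $\dot{\mathbf B}^{\alpha,\phi}(\Omega)$ is the space of measurable $u$ on $\Omega$ with finite $\|u\|_{\dot{\mathbf B}^{\alpha,\phi}(\Omega)}:=\inf\{\lambda>0:\int_\Omega\int_\Omega\phi(\frac{|u(x)-u(y)|}{\lambda|x-y|^{\alpha}})\frac{dx\,dy}{|x-y|^{2n}}\le1\}$. $L^\phi(\Omega)$ consists of measurable $u$ with $\|u\|_{L^\phi(\Omega)}:=\inf\{\lambda>0:\int_\Omega\phi(|u|/\lambda)\,dx\le1\}<\infty$, and $\mathbf B^{\alpha,\phi}(\Omega):=L^\phi(\Omega)\cap\dot{\mathbf B}^{\alpha,\phi}(\Omega)$. *)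

theory Defs
  imports "HOL-Analysis.Analysis"
begin

definition young_function :: "(real \<Rightarrow> real) \<Rightarrow> bool" where
  "young_function \<phi> \<longleftrightarrow>
     continuous_on {0..} \<phi> \<and> convex_on {0..} \<phi> \<and> \<phi> 0 = 0 \<and>
     (\<forall>t>0. \<phi> t > 0) \<and> filterlim \<phi> at_top at_top"

definition meas_on :: "'a::euclidean_space set \<Rightarrow> ('a \<Rightarrow> real) \<Rightarrow> bool" where
  "meas_on \<Omega> u \<longleftrightarrow> set_borel_measurable lebesgue \<Omega> u"

definition besov_modular ::
  "real \<Rightarrow> (real \<Rightarrow> real) \<Rightarrow> 'a::euclidean_space set \<Rightarrow> ('a \<Rightarrow> real) \<Rightarrow> real \<Rightarrow> ennreal" where
  "besov_modular \<alpha> \<phi> \<Omega> u t =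
     (\<integral>\<^sup>+ x\<in>\<Omega>. (\<integral>\<^sup>+ y\<in>\<Omega>.
        ennreal (\<phi> (\<bar>u x - u y\<bar> / (t * dist x y powr \<alpha>)) / dist x y ^ (2 * DIM('a)))
      \<partial>lebesgue) \<partial>lebesgue)"

text \<open>Homogeneous space: measurable u with finite Luxemburg-type norm, i.e. the set
  of admissible lambda > 0 is nonempty (its infimum is then finite).\<close>
definition Bdot :: "real \<Rightarrow> (real \<Rightarrow> real) \<Rightarrow> 'a::euclidean_space set \<Rightarrow> ('a \<Rightarrow> real) set" where
  "Bdot \<alpha> \<phi> \<Omega> = {u. meas_on \<Omega> u \<and> (\<exists>t>0. besov_modular \<alpha> \<phi> \<Omega> u t \<le> 1)}"

definition Orlicz :: "(real \<Rightarrow> real) \<Rightarrow> 'a::euclidean_space set \<Rightarrow> ('a \<Rightarrow> real) set" where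
  "Orlicz \<phi> \<Omega> = {u. meas_on \<Omega> u \<and>
     (\<exists>t>0. (\<integral>\<^sup>+ x\<in>\<Omega>. ennreal (\<phi> (\<bar>u x\<bar> / t)) \<partial>lebesgue) \<le> 1)}"

definition Besov :: "real \<Rightarrow> (real \<Rightarrow> real) \<Rightarrow> 'a::euclidean_space set \<Rightarrow> ('a \<Rightarrow> real) set" where
  "Besov \<alpha> \<phi> \<Omega> = Orlicz \<phi> \<Omega> \<inter> Bdot \<alpha> \<phi> \<Omega>"

definition L1_loc :: "'a::euclidean_space set \<Rightarrow> ('a \<Rightarrow> real) set" where
  "L1_loc \<Omega> = {u. meas_on \<Omega> u \<and> (\<forall>K. compact K \<and> K \<subseteq> \<Omega> \<longrightarrow> set_integrable lebesgue K u)}"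

end

theory Submission
  imports Defs
begin

(* The Besov modular is the integral over x in Omega of the inner integral
   besov_modular_at x = int_Omega phi(|u x - u y| / (t |x - y|^alpha)) / |x - y|^(2n) dy,
   so when it is finite, besov_modular_at cannot be infinite on Omega minus a point, a
   nonempty open set of positive measure; this gives two distinct points x0, x1 where it is
   finite.  For y in a compact K
   with |x - y| >= r the weights |x - y|^(-alpha) and |x - y|^(-2n) are bounded below and
   above, and convexity of phi gives s <= 1 + phi s / phi 1; hence |u y| <= C (1 + integrand(y))
   and u is integrable on K minus the ball of radius r about x.  With r = |x0 - x1| / 2 the two
   complements cover K. *)

lemma young_function_nonneg: "young_function \<phi> \<Longrightarrow> 0 \<le> s \<Longrightarrow> 0 \<le> \<phi> s"
  unfolding young_function_def by (cases "s = 0") (auto simp: less_imp_le)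

lemma young_function_scale:
  assumes "young_function \<phi>" "0 \<le> c" "c \<le> 1" "0 \<le> s"
  shows "\<phi> (c * s) \<le> c * \<phi> s"
proof -
  have "convex_on {0..} \<phi>" "\<phi> 0 = 0"
    using assms(1) by (auto simp: young_function_def)
  moreover have "\<phi> ((1 - c) *\<^sub>R 0 + c *\<^sub>R s) \<le> (1 - c) * \<phi> 0 + c * \<phi> s"
    using assms calculation(1) by (intro convex_onD) auto
  ultimately show ?thesis by simp
qed

lemma young_function_le_one_plus:
  assumes "young_function \<phi>" "0 \<le> s"
  shows "s \<le> 1 + \<phi> s / \<phi> 1"
proof -
  have "0 < \<phi> 1" using assms(1) by (simp add: young_function_def)
  show ?thesis
  proof (cases "s \<le> 1")
    case True
    moreover have "0 \<le> \<phi> s / \<phi> 1"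
      using young_function_nonneg[OF assms] \<open>0 < \<phi> 1\<close> by simp
    ultimately show ?thesis by linarith
  next
    case False
    have "\<phi> 1 = \<phi> ((1 / s) * s)" using False by simp
    also have "\<dots> \<le> (1 / s) * \<phi> s" using assms False by (intro young_function_scale) auto
    finally have "s \<le> \<phi> s / \<phi> 1" using False \<open>0 < \<phi> 1\<close> by (simp add: field_simps)
    then show ?thesis by simp
  qed
qed

lemma borel_measurable_young_function:
  assumes "young_function \<phi>"
  shows "(\<lambda>s. \<phi> (max 0 s)) \<in> borel_measurable borel"
proof -
  have "continuous_on {0..} \<phi>" using assms by (simp add: young_function_def)
  then have "continuous_on UNIV (\<lambda>s. \<phi> (max 0 s))"
    by (rule continuous_on_compose2) (auto intro!: continuous_intros)
  then show ?thesis by (rule borel_measurable_continuous_onI)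
qed

lemma difference_le_besov_integrand:
  fixes w d r D t \<alpha> :: real
  assumes "young_function \<phi>" "\<alpha> \<le> 0" "0 < t" "0 \<le> w" "0 < r" "r \<le> d" "d \<le> D"
  shows "w \<le> t / r powr (- \<alpha>) * (1 + D ^ k / \<phi> 1 * (\<phi> (w / (t * d powr \<alpha>)) / d ^ k))"
proof -
  define a where "a = w / (t * d powr \<alpha>)"
  have "0 < d" "0 < \<phi> 1" using assms by (auto simp: young_function_def)
  have a_eq: "a = w * d powr (- \<alpha>) / t"
    using \<open>0 < d\<close> by (simp add: a_def powr_minus_divide)
  have "r powr (- \<alpha>) \<le> d powr (- \<alpha>)"
    using assms by (intro powr_mono2) auto
  then have "w * r powr (- \<alpha>) / t \<le> a"
    unfolding a_eq using assms by (intro divide_right_mono mult_left_mono) auto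
  then have "w \<le> t / r powr (- \<alpha>) * a"
    using assms by (simp add: field_simps)
  have "\<phi> a \<le> D ^ k * (\<phi> a / d ^ k)"
  proof -
    have "d ^ k \<le> D ^ k" using assms \<open>0 < d\<close> by (intro power_mono) auto
    moreover have "0 \<le> \<phi> a / d ^ k" using assms by (simp add: young_function_nonneg a_def)
    ultimately have "d ^ k * (\<phi> a / d ^ k) \<le> D ^ k * (\<phi> a / d ^ k)"
      by (rule mult_right_mono)
    then show ?thesis using \<open>0 < d\<close> by simp
  qed
  then have "\<phi> a / \<phi> 1 \<le> D ^ k * (\<phi> a / d ^ k) / \<phi> 1"
    using \<open>0 < \<phi> 1\<close> by (intro divide_right_mono) auto
  note \<open>w \<le> t / r powr (- \<alpha>) * a\<close>
  also have "t / r powr (- \<alpha>) * a \<le> t / r powr (- \<alpha>) * (1 + \<phi> a / \<phi> 1)"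
    using assms by (intro mult_left_mono young_function_le_one_plus) (auto simp: a_def)
  also have "\<dots> \<le> t / r powr (- \<alpha>) * (1 + D ^ k / \<phi> 1 * (\<phi> a / d ^ k))"
    using assms \<open>\<phi> a / \<phi> 1 \<le> _\<close> by (intro mult_left_mono) (auto simp: ac_simps)
  finally show ?thesis unfolding a_def .
qed

definition besov_modular_at ::
  "real \<Rightarrow> (real \<Rightarrow> real) \<Rightarrow> 'a::euclidean_space set \<Rightarrow> ('a \<Rightarrow> real) \<Rightarrow> real \<Rightarrow> 'a \<Rightarrow> ennreal" where
  "besov_modular_at \<alpha> \<phi> \<Omega> u t x =
     (\<integral>\<^sup>+ y\<in>\<Omega>. ennreal (\<phi> (\<bar>u x - u y\<bar> / (t * dist x y powr \<alpha>)) / dist x y ^ (2 * DIM('a)))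
      \<partial>lebesgue)"

lemma besov_modular_eq_integral_at:
  "besov_modular \<alpha> \<phi> \<Omega> u t = (\<integral>\<^sup>+ x\<in>\<Omega>. besov_modular_at \<alpha> \<phi> \<Omega> u t x \<partial>lebesgue)"
  by (simp add: besov_modular_def besov_modular_at_def)

lemma borel_measurable_besov_integrand:
  fixes u :: "'a::euclidean_space \<Rightarrow> real"
  assumes "young_function \<phi>" "0 < t" "meas_on \<Omega> u" and [measurable]: "\<Omega> \<in> sets lebesgue"
  shows "(\<lambda>y. indicator \<Omega> y * (\<phi> (\<bar>c - u y\<bar> / (t * dist x y powr \<alpha>)) / dist x y ^ k))
    \<in> borel_measurable lebesgue"
proof -
  define v where "v = (\<lambda>y. indicator \<Omega> y * u y)"
  define \<psi> where "\<psi> s = \<phi> (max 0 s)" for s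
  have [measurable]: "v \<in> borel_measurable lebesgue"
    using assms(3) by (simp add: v_def meas_on_def set_borel_measurable_def)
  have [measurable]: "\<psi> \<in> borel_measurable borel"
    unfolding \<psi>_def using assms(1) by (rule borel_measurable_young_function)
  have "(\<lambda>y. dist x y) \<in> borel_measurable borel"
    by (intro borel_measurable_continuous_onI continuous_intros)
  then have [measurable]: "(\<lambda>y. dist x y) \<in> borel_measurable lebesgue"
    by (intro measurable_completion) simp
  have "(\<lambda>y. indicator \<Omega> y * (\<psi> (\<bar>c - v y\<bar> / (t * dist x y powr \<alpha>)) / dist x y ^ k))
      \<in> borel_measurable lebesgue"
    by measurable
  moreover have "(\<lambda>y. indicator \<Omega> y * (\<psi> (\<bar>c - v y\<bar> / (t * dist x y powr \<alpha>)) / dist x y ^ k)) =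
      (\<lambda>y. indicator \<Omega> y * (\<phi> (\<bar>c - u y\<bar> / (t * dist x y powr \<alpha>)) / dist x y ^ k))"
    using \<open>0 < t\<close> by (auto simp: fun_eq_iff \<psi>_def v_def max_absorb2 split: split_indicator)
  ultimately show ?thesis by metis
qed

lemma set_integrable_besov_integrand:
  fixes u :: "'a::euclidean_space \<Rightarrow> real"
  assumes "young_function \<phi>" "0 < t" "meas_on \<Omega> u" "\<Omega> \<in> sets lebesgue"
    and "besov_modular_at \<alpha> \<phi> \<Omega> u t x < \<infinity>"
  shows "set_integrable lebesgue \<Omega>
    (\<lambda>y. \<phi> (\<bar>u x - u y\<bar> / (t * dist x y powr \<alpha>)) / dist x y ^ (2 * DIM('a)))"
    (is "set_integrable _ _ ?g")
  unfolding set_integrable_def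
proof (rule integrableI_nonneg)
  show "(\<lambda>y. indicator \<Omega> y *\<^sub>R ?g y) \<in> borel_measurable lebesgue"
    using borel_measurable_besov_integrand[OF assms(1-4), of "u x" x \<alpha> "2 * DIM('a)"] by simp
  show "AE y in lebesgue. 0 \<le> indicator \<Omega> y *\<^sub>R ?g y"
    using assms(1,2) by (simp add: young_function_nonneg)
  have "(\<integral>\<^sup>+ y. ennreal (indicator \<Omega> y *\<^sub>R ?g y) \<partial>lebesgue) = besov_modular_at \<alpha> \<phi> \<Omega> u t x"
    unfolding besov_modular_at_def by (auto intro!: nn_integral_cong split: split_indicator)
  with assms(5) show "(\<integral>\<^sup>+ y. ennreal (indicator \<Omega> y *\<^sub>R ?g y) \<partial>lebesgue) < \<infinity>" by simp
qed

lemma set_integrable_compact_minus_ball: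
  fixes u :: "'a::euclidean_space \<Rightarrow> real"
  assumes "young_function \<phi>" "\<alpha> \<le> 0" "0 < t" "meas_on \<Omega> u" "\<Omega> \<in> sets lebesgue"
    and "besov_modular_at \<alpha> \<phi> \<Omega> u t x < \<infinity>"
    and "compact K" "K \<subseteq> \<Omega>" "0 < r"
  shows "set_integrable lebesgue (K - ball x r) u"
proof -
  define S where "S = K - ball x r"
  define g where "g y = \<phi> (\<bar>u x - u y\<bar> / (t * dist x y powr \<alpha>)) / dist x y ^ (2 * DIM('a))" for y
  define c where "c = t / r powr (- \<alpha>)"
  obtain D where D: "\<forall>y\<in>K. dist x y \<le> D"
    using \<open>compact K\<close> compact_imp_bounded bounded_any_center by metis
  have S: "S \<in> sets lebesgue" "S \<subseteq> \<Omega>" "emeasure lebesgue S < \<infinity>"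
  proof -
    have "K \<in> sets lborel" using \<open>compact K\<close> by (simp add: borel_compact)
    then show "S \<in> sets lebesgue" by (simp add: S_def)
    show "S \<subseteq> \<Omega>" using \<open>K \<subseteq> \<Omega>\<close> by (auto simp: S_def)
    have "emeasure lborel K < \<infinity>" using \<open>compact K\<close> by (rule emeasure_compact_finite)
    then show "emeasure lebesgue S < \<infinity>"
      using \<open>K \<in> sets lborel\<close> emeasure_mono[of S K lebesgue] by (auto simp: S_def le_less_trans)
  qed
  have bound: "\<bar>u y\<bar> \<le> (\<bar>u x\<bar> + c) + c * D ^ (2 * DIM('a)) / \<phi> 1 * g y" if "y \<in> S" for y
  proof -
    have "r \<le> dist x y" "dist x y \<le> D" using that D by (auto simp: S_def)
    then have "\<bar>u x - u y\<bar> \<le> c * (1 + D ^ (2 * DIM('a)) / \<phi> 1 * g y)"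
      unfolding c_def g_def using assms by (intro difference_le_besov_integrand) auto
    then show ?thesis by (simp add: algebra_simps)
  qed
  have "set_integrable lebesgue S (\<lambda>y. (\<bar>u x\<bar> + c) + c * D ^ (2 * DIM('a)) / \<phi> 1 * g y)"
  proof (rule set_integral_add)
    show "set_integrable lebesgue S (\<lambda>y. \<bar>u x\<bar> + c)"
      using S by (simp add: set_integrable_def)
    have "set_integrable lebesgue \<Omega> g"
      unfolding g_def using assms by (intro set_integrable_besov_integrand) auto
    then show "set_integrable lebesgue S (\<lambda>y. c * D ^ (2 * DIM('a)) / \<phi> 1 * g y)"
      using S by (intro set_integrable_mult_right) (auto intro: set_integrable_subset)
  qed
  moreover have "set_borel_measurable lebesgue S u"
    using assms(4) S by (auto simp: meas_on_def intro: set_borel_measurable_subset)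
  ultimately show ?thesis
    unfolding S_def[symmetric] using bound
    by (elim set_integrable_bound) (auto intro!: AE_I2 order_trans[OF _ abs_ge_self])
qed

lemma nn_set_integral_less_top_imp_finite_off_point:
  fixes F :: "'a::euclidean_space \<Rightarrow> ennreal"
  assumes "open \<Omega>" "\<Omega> \<noteq> {}" "(\<integral>\<^sup>+ x\<in>\<Omega>. F x \<partial>lebesgue) < \<infinity>"
  shows "\<exists>x\<in>\<Omega> - {p}. F x < \<infinity>"
proof (rule ccontr)
  assume "\<not> ?thesis"
  then have "\<forall>x\<in>\<Omega> - {p}. F x = \<infinity>" by (auto simp: less_top)
  have "\<Omega> - {p} \<noteq> {}"
    using assms(1,2) not_open_singleton by (metis Diff_eq_empty_iff subset_singleton_iff)
  moreover have "open (\<Omega> - {p})" using assms(1) by (rule open_delete)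
  ultimately have "\<not> negligible (\<Omega> - {p})" by (intro open_not_negligible)
  then have "emeasure lebesgue (\<Omega> - {p}) \<noteq> 0"
    using \<open>open (\<Omega> - {p})\<close> by (subst (asm) negligible_iff_emeasure0) (auto simp: borel_open)
  then have "\<infinity> = (\<integral>\<^sup>+ x. \<infinity> * indicator (\<Omega> - {p}) x \<partial>lebesgue)"
    using \<open>open (\<Omega> - {p})\<close>
    by (subst nn_integral_cmult_indicator) (auto simp: borel_open ennreal_top_mult)
  also have "\<dots> \<le> (\<integral>\<^sup>+ x\<in>\<Omega>. F x \<partial>lebesgue)"
    using \<open>\<forall>x\<in>\<Omega> - {p}. F x = \<infinity>\<close> by (intro nn_integral_mono) (auto split: split_indicator)
  finally show False using assms(3) by simp
qed

lemma L1_loc_if_finite_modular_at_two_points: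
  fixes u :: "'a::euclidean_space \<Rightarrow> real"
  assumes "young_function \<phi>" "\<alpha> \<le> 0" "0 < t" "meas_on \<Omega> u" "\<Omega> \<in> sets lebesgue"
    and "besov_modular_at \<alpha> \<phi> \<Omega> u t x0 < \<infinity>" "besov_modular_at \<alpha> \<phi> \<Omega> u t x1 < \<infinity>"
    and "x0 \<noteq> x1"
  shows "u \<in> L1_loc \<Omega>"
proof -
  define r where "r = dist x0 x1 / 2"
  have "0 < r" using \<open>x0 \<noteq> x1\<close> by (simp add: r_def)
  have "set_integrable lebesgue K u" if "compact K" "K \<subseteq> \<Omega>" for K
  proof -
    have "K \<subseteq> (K - ball x0 r) \<union> (K - ball x1 r)"
    proof
      fix y assume "y \<in> K"
      have "dist x0 x1 \<le> dist x0 y + dist x1 y"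
        using dist_triangle[of x0 x1 y] by (simp add: dist_commute)
      then show "y \<in> (K - ball x0 r) \<union> (K - ball x1 r)" using \<open>y \<in> K\<close> by (auto simp: r_def)
    qed
    moreover have "set_integrable lebesgue ((K - ball x0 r) \<union> (K - ball x1 r)) u"
      using assms that \<open>0 < r\<close>
      by (intro set_integrable_Un set_integrable_compact_minus_ball) (auto simp: borel_compact)
    ultimately show ?thesis
      using \<open>compact K\<close> by (elim set_integrable_subset) (auto simp: borel_compact)
  qed
  with \<open>meas_on \<Omega> u\<close> show ?thesis by (simp add: L1_loc_def)
qed

theorem lemma2p2:
  fixes \<alpha> :: real and \<phi> :: "real \<Rightarrow> real" and \<Omega> :: "'a::euclidean_space set"
  assumes "DIM('a) \<ge> 2"
    and "- real DIM('a) < \<alpha>" and "\<alpha> < 0"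
    and "young_function \<phi>"
    and "open \<Omega>" and "connected \<Omega>" and "\<Omega> \<noteq> {}"
  shows "Besov \<alpha> \<phi> \<Omega> \<subseteq> Bdot \<alpha> \<phi> \<Omega> \<and> Bdot \<alpha> \<phi> \<Omega> \<subseteq> L1_loc \<Omega>"
proof
  show "Besov \<alpha> \<phi> \<Omega> \<subseteq> Bdot \<alpha> \<phi> \<Omega>" by (simp add: Besov_def)
  show "Bdot \<alpha> \<phi> \<Omega> \<subseteq> L1_loc \<Omega>"
  proof
    fix u assume "u \<in> Bdot \<alpha> \<phi> \<Omega>"
    then obtain t where "0 < t" "meas_on \<Omega> u" and "besov_modular \<alpha> \<phi> \<Omega> u t \<le> 1"
      by (auto simp: Bdot_def)
    then have "(\<integral>\<^sup>+ x\<in>\<Omega>. besov_modular_at \<alpha> \<phi> \<Omega> u t x \<partial>lebesgue) < \<infinity>"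
      by (simp add: besov_modular_eq_integral_at le_less_trans)
    note finite_off_point = nn_set_integral_less_top_imp_finite_off_point[OF \<open>open \<Omega>\<close> \<open>\<Omega> \<noteq> {}\<close> this]
    obtain x0 where "besov_modular_at \<alpha> \<phi> \<Omega> u t x0 < \<infinity>"
      using finite_off_point by blast
    moreover obtain x1 where "x1 \<noteq> x0" "besov_modular_at \<alpha> \<phi> \<Omega> u t x1 < \<infinity>"
      using finite_off_point[of x0] by blast
    ultimately show "u \<in> L1_loc \<Omega>"
      using assms \<open>0 < t\<close> \<open>meas_on \<Omega> u\<close>
      by (intro L1_loc_if_finite_modular_at_two_points) (auto simp: borel_open)
  qed
qed

end
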